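(* Let $P_1$ be the uniform distribution on $[0,\frac12]$, let $P_2$ be the uniform distribution on $[\frac12,1]$, and let $P=\frac34P_1+\frac14P_2$. Then the set $\{\frac14,\frac34\}$ forms an optimal set of two-means for $P$, with quantization error $V_2=\frac1{48}$.
   Context: For a finite set $\alpha\subset\mathbb R$, $V(P;\alpha)=\int\min_{a\in\alpha}(x-a)^2\,dP(x)$; $V_n=\inf\{V(P;\alpha):\mathrm{card}(\alpha)\le n\}$; an optimal set of $n$-means is a set $\alpha$ with $\mathrm{card}(\alpha)\le n$ and $V(P;\alpha)=V_n$. *)

theory Defs
  imports "HOL-Probability.Probability"
begin

definition unif_dens :: "real \<Rightarrow> real \<Rightarrow> real \<Rightarrow> real" where
  "unif_dens a b x = indicator {a..b} x / (b - a)"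

definition P_mix :: "real measure" where
  "P_mix = density lborel (\<lambda>x. ennreal (3/4 * unif_dens 0 (1/2) x + 1/4 * unif_dens (1/2) 1 x))"

definition quant_err :: "real measure \<Rightarrow> real set \<Rightarrow> ennreal" where
  "quant_err P \<alpha> = (\<integral>\<^sup>+ x. ennreal (Min ((\<lambda>a. (x - a)^2) ` \<alpha>)) \<partial>P)"

definition Vn :: "real measure \<Rightarrow> nat \<Rightarrow> ennreal" where
  "Vn P n = (INF \<alpha> \<in> {\<alpha>. finite \<alpha> \<and> \<alpha> \<noteq> {} \<and> card \<alpha> \<le> n}. quant_err P \<alpha>)"

definition optimal_n_means :: "real measure \<Rightarrow> nat \<Rightarrow> real set \<Rightarrow> bool" where
  "optimal_n_means P n \<alpha> \<longleftrightarrow> finite \<alpha> \<and> \<alpha> \<noteq> {} \<and> card \<alpha> \<le> n \<and> quant_err P \<alpha> = Vn P n"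

end

theory Submission
  imports Defs
begin

text \<open>
  Every admissible set is \<open>{a, b}\<close> with \<open>a \<le> b\<close>. Each point of \<open>[0, 1]\<close> is served by the nearer
  of \<open>a\<close>, \<open>b\<close>, so the Voronoi boundary \<open>(a + b) / 2\<close> splits both pieces of the step density of
  \<open>P\<close>, and integrating the cubic antiderivatives gives the error as an explicit piecewise
  polynomial in \<open>a\<close> and \<open>b\<close>. According to where the boundary falls (left of \<open>[0, 1]\<close>, in
  \<open>[0, 1/2]\<close>, in \<open>[1/2, 1]\<close>, right of \<open>[0, 1]\<close>) this polynomial minus \<open>1/48\<close> is nonnegative by an
  explicit sum-of-squares certificate; at \<open>(1/4, 3/4)\<close> its value is exactly \<open>1/48\<close>.
\<close>

lemma optimal_n_meansI:
  assumes "finite \<alpha>" "\<alpha> \<noteq> {}" "card \<alpha> \<le> n"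
    and "\<And>\<beta>. finite \<beta> \<Longrightarrow> \<beta> \<noteq> {} \<Longrightarrow> card \<beta> \<le> n \<Longrightarrow> quant_err P \<alpha> \<le> quant_err P \<beta>"
  shows "optimal_n_means P n \<alpha>" and "Vn P n = quant_err P \<alpha>"
proof -
  have "\<alpha> \<in> {\<alpha>. finite \<alpha> \<and> \<alpha> \<noteq> {} \<and> card \<alpha> \<le> n}"
    using assms(1-3) by simp
  then have "Vn P n \<le> quant_err P \<alpha>"
    unfolding Vn_def by (rule INF_lower)
  moreover have "quant_err P \<alpha> \<le> Vn P n"
    unfolding Vn_def by (rule INF_greatest) (use assms(4) in auto)
  ultimately show V: "Vn P n = quant_err P \<alpha>"
    by (rule antisym)
  show "optimal_n_means P n \<alpha>"
    unfolding optimal_n_means_def V using assms(1-3) by simp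
qed

lemma card_le_2_obtain_pair:
  fixes \<alpha> :: "'a :: linorder set"
  assumes "finite \<alpha>" "\<alpha> \<noteq> {}" "card \<alpha> \<le> 2"
  obtains a b where "a \<le> b" "\<alpha> = {a, b}"
proof -
  have "card \<alpha> = 1 \<or> card \<alpha> = 2"
    using assms by (auto simp: le_Suc_eq numeral_2_eq_2)
  then have "\<exists>a b. a \<le> b \<and> \<alpha> = {a, b}"
  proof
    assume "card \<alpha> = 1"
    then show ?thesis by (auto simp: card_1_singleton_iff)
  next
    assume "card \<alpha> = 2"
    then obtain x y where "\<alpha> = {x, y}"
      by (auto simp: card_2_iff)
    then show ?thesis
      by (metis insert_commute linear)
  qed
  then show ?thesis
    using that by blast
qed

lemma has_integral_sq_dist:
  fixes c l r :: real
  assumes "l \<le> r"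
  shows "((\<lambda>x. (x - c)^2) has_integral ((r - c)^3 - (l - c)^3) / 3) {l..r}"
proof -
  have "((\<lambda>x. (x - c)^3 / 3) has_vector_derivative (x - c)^2) (at x within {l..r})" for x
    by (auto intro!: derivative_eq_intros simp: power2_eq_square
        simp flip: has_real_derivative_iff_has_vector_derivative)
  then have "((\<lambda>x. (x - c)^2) has_integral (r - c)^3 / 3 - (l - c)^3 / 3) {l..r}"
    by (intro fundamental_theorem_of_calculus[OF assms]) auto
  then show ?thesis
    by (simp add: diff_divide_distrib)
qed

lemma min_sq_dist_two_points:
  fixes a b x :: real
  assumes "a \<le> b"
  shows "min ((x - a)^2) ((x - b)^2) = (if x \<le> (a + b) / 2 then (x - a)^2 else (x - b)^2)"
proof -
  have "(x - a)^2 - (x - b)^2 = (b - a) * (2 * x - a - b)"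
    by (simp add: power2_eq_square algebra_simps)
  moreover have "(b - a) * (2 * x - a - b) \<le> 0 \<longleftrightarrow> x \<le> (a + b) / 2 \<or> a = b"
    using assms by (auto simp: mult_le_0_iff)
  ultimately show ?thesis
    by auto
qed

text \<open>\<open>s\<close> is the Voronoi boundary \<open>(a + b) / 2\<close> clamped to \<open>[l, r]\<close>.\<close>

definition two_point_err_on :: "real \<Rightarrow> real \<Rightarrow> real \<Rightarrow> real \<Rightarrow> real" where
  "two_point_err_on a b l r =
     (let s = max l (min r ((a + b) / 2))
      in ((s - a)^3 - (l - a)^3) / 3 + ((r - b)^3 - (s - b)^3) / 3)"

lemma has_integral_min_sq_dist:
  fixes a b l r :: real
  assumes "a \<le> b" "l \<le> r"
  shows "((\<lambda>x. min ((x - a)^2) ((x - b)^2)) has_integral two_point_err_on a b l r) {l..r}"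
proof -
  define s where "s = max l (min r ((a + b) / 2))"
  have "l \<le> s" "s \<le> r"
    using assms(2) unfolding s_def by auto
  have left: "((\<lambda>x. min ((x - a)^2) ((x - b)^2)) has_integral ((s - a)^3 - (l - a)^3) / 3) {l..s}"
  proof (rule has_integral_spike_finite[OF finite.insertI[OF finite.emptyI]
        _ has_integral_sq_dist[OF \<open>l \<le> s\<close>]])
    show "min ((x - a)^2) ((x - b)^2) = (x - a)^2" if "x \<in> {l..s} - {s}" for x
      using that assms(1) unfolding s_def min_sq_dist_two_points[OF assms(1)]
      by (auto simp: max_def min_def split: if_splits)
  qed
  have right: "((\<lambda>x. min ((x - a)^2) ((x - b)^2)) has_integral ((r - b)^3 - (s - b)^3) / 3) {s..r}"
  proof (rule has_integral_spike_finite[OF finite.insertI[OF finite.emptyI]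
        _ has_integral_sq_dist[OF \<open>s \<le> r\<close>]])
    show "min ((x - a)^2) ((x - b)^2) = (x - b)^2" if "x \<in> {s..r} - {s}" for x
      using that assms(1) unfolding s_def min_sq_dist_two_points[OF assms(1)]
      by (auto simp: max_def min_def split: if_splits)
  qed
  show ?thesis
    using has_integral_combine[OF \<open>l \<le> s\<close> \<open>s \<le> r\<close> left right]
    unfolding two_point_err_on_def s_def Let_def by simp
qed

lemma nn_integral_P_mix:
  assumes g: "g \<in> borel_measurable borel" and nonneg: "\<And>x. 0 \<le> g x"
  shows "(\<integral>\<^sup>+x. ennreal (g x) \<partial>P_mix) =
     (\<integral>\<^sup>+x. ennreal (3/2 * g x) * indicator {0..1/2} x \<partial>lborel) +
     (\<integral>\<^sup>+x. ennreal (1/2 * g x) * indicator {1/2..1} x \<partial>lborel)"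
proof -
  have density: "3/4 * unif_dens 0 (1/2) x + 1/4 * unif_dens (1/2) 1 x =
      3/2 * indicator {0..1/2} x + 1/2 * indicator {1/2..1} x" for x :: real
    by (simp add: unif_dens_def)
  have "(\<integral>\<^sup>+x. ennreal (g x) \<partial>P_mix) =
     (\<integral>\<^sup>+x. ennreal (3/2 * g x) * indicator {0..1/2} x +
            ennreal (1/2 * g x) * indicator {1/2..1} x \<partial>lborel)"
    unfolding P_mix_def using g nonneg
    by (subst nn_integral_density)
       (auto intro!: nn_integral_cong simp: density unif_dens_def indicator_def
         simp flip: ennreal_mult ennreal_plus)
  also have "\<dots> = (\<integral>\<^sup>+x. ennreal (3/2 * g x) * indicator {0..1/2} x \<partial>lborel) +
     (\<integral>\<^sup>+x. ennreal (1/2 * g x) * indicator {1/2..1} x \<partial>lborel)"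
    using g by (intro nn_integral_add) auto
  finally show ?thesis .
qed

definition mix_err :: "real \<Rightarrow> real \<Rightarrow> real" where
  "mix_err a b = 3/2 * two_point_err_on a b 0 (1/2) + 1/2 * two_point_err_on a b (1/2) 1"

lemma quant_err_P_mix_pair:
  assumes "a \<le> b"
  shows "quant_err P_mix {a, b} = ennreal (mix_err a b)"
proof -
  let ?g = "\<lambda>x. min ((x - a)^2) ((x - b)^2)"
  have piece: "(\<integral>\<^sup>+x. ennreal (c * ?g x) * indicator {l..r} x \<partial>lborel) =
      ennreal (c * two_point_err_on a b l r)" if "0 \<le> c" "l \<le> r" for c l r :: real
    using that
    by (intro nn_integral_has_integral_lebesgue'
        has_integral_mult_right has_integral_min_sq_dist assms) auto
  have nonneg: "0 \<le> two_point_err_on a b l r" if "l \<le> r" for l r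
    using has_integral_nonneg[OF has_integral_min_sq_dist[OF assms that]] by simp
  have "quant_err P_mix {a, b} = (\<integral>\<^sup>+x. ennreal (?g x) \<partial>P_mix)"
    unfolding quant_err_def by simp
  also have "\<dots> = ennreal (3/2 * two_point_err_on a b 0 (1/2))
      + ennreal (1/2 * two_point_err_on a b (1/2) 1)"
    using piece[of "3/2" 0 "1/2"] piece[of "1/2" "1/2" 1]
    by (subst nn_integral_P_mix) simp_all
  also have "\<dots> = ennreal (mix_err a b)"
    unfolding mix_err_def using nonneg[of 0 "1/2"] nonneg[of "1/2" 1]
    by (intro ennreal_plus[symmetric]) simp_all
  finally show ?thesis .
qed

text \<open>Here all of \<open>[0, 1]\<close> is served by one point \<open>c\<close>, whose error is least at the mean \<open>3/8\<close>.\<close>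

lemma mix_err_ge_outside:
  assumes "(a + b) / 2 \<le> 0 \<or> 1 \<le> (a + b) / 2"
  shows "1/48 \<le> mix_err a b"
proof -
  obtain c where "mix_err a b = 3/2 * ((1/2 - c)^3 - (0 - c)^3) / 3 + 1/2 * ((1 - c)^3 - (1/2 - c)^3) / 3"
    using assms by (auto simp: mix_err_def two_point_err_on_def)
  also have "\<dots> = (c - 3/8)^2 + 13/192"
    by (simp add: power3_eq_cube power2_eq_square field_simps)
  finally show ?thesis
    using zero_le_power2[of "c - 3/8"] by linarith
qed

lemma mix_err_ge_left_piece:
  assumes m: "0 \<le> (a + b) / 2" "(a + b) / 2 \<le> 1/2"
  shows "1/48 \<le> mix_err a b"
proof -
  define m where "m = (a + b) / 2"
  define k where "k = 1 - 3 * m / 2"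
  have k: "0 < k"
    using m unfolding k_def m_def by (simp add: field_simps)
  have "max 0 (min (1/2) m) = m" "max (1/2) (min 1 m) = 1/2"
    using m unfolding m_def by auto
  then have err: "mix_err a b = 3/2 * ((m - a)^3 - (0 - a)^3) / 3 + 3/2 * ((1/2 - b)^3 - (m - b)^3) / 3
      + 1/2 * ((1 - b)^3 - (1/2 - b)^3) / 3"
    unfolding mix_err_def two_point_err_on_def Let_def m_def[symmetric] by (simp add: field_simps)
  have "k * (mix_err a b - 1/48) =
      k * (3/2 * m * (a - m/2)^2) + (k * b - (3/8 - 3 * m^2 / 4))^2 + 3/64 * (1 - 2 * m)^3"
    unfolding err k_def m_def by (simp add: power3_eq_cube power2_eq_square field_simps)
  also have "0 \<le> \<dots>"
    using k m unfolding m_def by (intro add_nonneg_nonneg) auto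
  finally show ?thesis
    using k by (simp add: zero_le_mult_iff)
qed

lemma mix_err_ge_right_piece:
  assumes m: "1/2 \<le> (a + b) / 2" "(a + b) / 2 \<le> 1"
  shows "1/48 \<le> mix_err a b"
proof -
  define m where "m = (a + b) / 2"
  define k where "k = (1 + m) / 2"
  have k: "0 < k"
    using m unfolding k_def m_def by (simp add: field_simps)
  have "max 0 (min (1/2) m) = 1/2" "max (1/2) (min 1 m) = m"
    using m unfolding m_def by auto
  then have err: "mix_err a b = 3/2 * ((1/2 - a)^3 - (0 - a)^3) / 3 + 1/2 * ((m - a)^3 - (1/2 - a)^3) / 3
      + 1/2 * ((1 - b)^3 - (m - b)^3) / 3"
    unfolding mix_err_def two_point_err_on_def Let_def m_def[symmetric] by (simp add: field_simps)
  have "k * (mix_err a b - 1/48) =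
      k * (1/2 * (1 - m) * (b - (1 + m) / 2)^2) + (k * a - (1/8 + m^2 / 4))^2
      + 1/64 * (1 - 2 * m)^2 * (1 + 2 * m)"
    unfolding err k_def m_def by (simp add: power3_eq_cube power2_eq_square field_simps)
  also have "0 \<le> \<dots>"
    using k m unfolding m_def by (intro add_nonneg_nonneg) auto
  finally show ?thesis
    using k by (simp add: zero_le_mult_iff)
qed

lemma mix_err_ge: "1/48 \<le> mix_err a b"
  using mix_err_ge_outside mix_err_ge_left_piece mix_err_ge_right_piece
  by (meson linear)

lemma mix_err_quarters: "mix_err (1/4) (3/4) = 1/48"
  by (simp add: mix_err_def two_point_err_on_def power3_eq_cube)

theorem lemma4p4:
  shows "optimal_n_means P_mix 2 {1/4, 3/4} \<and> Vn P_mix 2 = ennreal (1/48)"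
proof -
  have opt: "quant_err P_mix {1/4, 3/4} = ennreal (1/48)"
    using quant_err_P_mix_pair[of "1/4" "3/4"] by (simp add: mix_err_quarters)
  have lower: "quant_err P_mix {1/4, 3/4} \<le> quant_err P_mix \<beta>"
    if \<beta>: "finite \<beta>" "\<beta> \<noteq> {}" "card \<beta> \<le> 2" for \<beta>
  proof -
    obtain a b where "a \<le> b" "\<beta> = {a, b}"
      using card_le_2_obtain_pair[OF \<beta>] .
    then show ?thesis
      using mix_err_ge[of a b] by (simp add: opt quant_err_P_mix_pair ennreal_leI)
  qed
  have "optimal_n_means P_mix 2 {1/4, 3/4}" "Vn P_mix 2 = quant_err P_mix {1/4, 3/4}"
    using optimal_n_meansI[OF _ _ _ lower] by simp_all
  then show ?thesis
    unfolding opt by simp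
qed

end
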